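(* For every $K\in\mathbb{N}^+$, the set $\{[\sigma_1(\tfrac{w}{\pi+1}),\sigma_1(\tfrac{w}{\pi+2}),\dots,\sigma_1(\tfrac{w}{\pi+K})]^T: w\in\mathbb{R}\}\subseteq[0,1]^K$ is dense in $[0,1]^K$.
   Context: $\sigma_1:\mathbb{R}\to\mathbb{R}$ is the continuous triangular-wave function of period $2$: $\sigma_1(x)=|x|$ for $x\in[-1,1]$ and $\sigma_1(x+2)=\sigma_1(x)$ for all $x\in\mathbb{R}$. $\pi$ is the usual constant (ratio of a circle's circumference to its diameter). *)

theory Defs
  imports "HOL-Analysis.Analysis"
begin

text \<open>Triangular wave of period 2: equals |x| on [-1,1] and is 2-periodic.\<close>
definition sigma1 :: "real \<Rightarrow> real" where
  "sigma1 x = \<bar>x - 2 * of_int \<lfloor>(x + 1) / 2\<rfloor>\<bar>"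

lemma sigma1_abs: "-1 \<le> x \<Longrightarrow> x \<le> 1 \<Longrightarrow> sigma1 x = \<bar>x\<bar>"
proof -
  assume a: "-1 \<le> x" "x \<le> 1"
  show ?thesis
  proof (cases "x = 1")
    case True then show ?thesis by (simp add: sigma1_def)
  next
    case False
    with a have "\<lfloor>(x + 1) / 2\<rfloor> = 0" by (simp add: floor_eq_iff)
    then show ?thesis by (simp add: sigma1_def)
  qed
qed

lemma sigma1_periodic: "sigma1 (x + 2) = sigma1 x"
proof -
  have "(x + 2 + 1) / 2 = (x + 1) / 2 + 1" by simp
  then have "\<lfloor>(x + 2 + 1) / 2\<rfloor> = \<lfloor>(x + 1) / 2\<rfloor> + 1"
    by (metis floor_add_int of_int_1)
  then show ?thesis by (simp add: sigma1_def algebra_simps)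
qed

end

(* The reciprocals 1/(pi + k), k = 1..K, are linearly independent over the integers: a relation
   would make pi a root of a nonzero integer polynomial, and pi is transcendental. Kronecker's
   theorem therefore gives t with t/(pi + k) close to y_k/2 modulo 1 for all k at once. For
   w = 2t the numbers w/(pi + k) are close to y_k modulo 2, and sigma1, being 2-periodic,
   1-Lipschitz and the identity on [0,1], maps them close to y_k.

   The transcendence of pi follows Niven's version of the Hermite-Lindemann argument. If pi were
   algebraic with conjugates rho_1, ..., rho_d, the product of (1 + e^(i rho_j)) (1 + e^(-i rho_j))
   would vanish because of the factor 1 + e^(i pi). Expanding it gives sum_X e^(theta_X) + q = 0
   over the nonzero subset sums theta_X, with an integer q >= 1. Newton's identities and
   the logarithmic derivative of prod_i (1 + e^(x_i X)) show that the theta_X have rational power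
   sums, so c theta_X are the roots of a monic integer polynomial for some c > 0. Niven's
   polynomial for a large prime p then turns the relation into a nonzero integer of absolute
   value less than 1. *)

theory Submission
  imports Defs
    "HOL-Computational_Algebra.Polynomial_FPS"
    "HOL-Computational_Algebra.Fundamental_Theorem_Algebra"
    "HOL-Analysis.Kronecker_Approximation_Theorem"
begin

unbundle no vec_syntax
unbundle fps_syntax

section \<open>Power sums and power series with coefficients in a subring\<close>

definition is_subring :: "'a :: comm_ring_1 set \<Rightarrow> bool" where
  "is_subring A \<longleftrightarrow> 0 \<in> A \<and> 1 \<in> A \<and> (\<forall>x\<in>A. \<forall>y\<in>A. x + y \<in> A \<and> x * y \<in> A \<and> - x \<in> A)"

lemma is_subring_Ints: "is_subring \<int>"
  and is_subring_Rats: "is_subring \<rat>"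
  unfolding is_subring_def by auto

lemma subring_add: "is_subring A \<Longrightarrow> x \<in> A \<Longrightarrow> y \<in> A \<Longrightarrow> x + y \<in> A"
  and subring_mult: "is_subring A \<Longrightarrow> x \<in> A \<Longrightarrow> y \<in> A \<Longrightarrow> x * y \<in> A"
  and subring_uminus: "is_subring A \<Longrightarrow> x \<in> A \<Longrightarrow> - x \<in> A"
  unfolding is_subring_def by auto

lemma subring_sum: "is_subring A \<Longrightarrow> (\<And>i. i \<in> I \<Longrightarrow> f i \<in> A) \<Longrightarrow> sum f I \<in> A"
  unfolding is_subring_def by (induction I rule: infinite_finite_induct) auto

lemma subring_of_nat: "is_subring A \<Longrightarrow> of_nat n \<in> A"
  by (induction n) (auto simp: is_subring_def)

definition fps_coeffs_in :: "'a set \<Rightarrow> 'a fps \<Rightarrow> bool" where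
  "fps_coeffs_in A f \<longleftrightarrow> (\<forall>n. f $ n \<in> A)"

lemma fps_coeffs_in_add:
  "is_subring A \<Longrightarrow> fps_coeffs_in A f \<Longrightarrow> fps_coeffs_in A g \<Longrightarrow> fps_coeffs_in A (f + g)"
  unfolding fps_coeffs_in_def by (auto intro!: subring_add)

lemma fps_coeffs_in_mult:
  "is_subring A \<Longrightarrow> fps_coeffs_in A f \<Longrightarrow> fps_coeffs_in A g \<Longrightarrow> fps_coeffs_in A (f * g)"
  unfolding fps_coeffs_in_def fps_mult_nth by (auto intro!: subring_sum subring_mult)

lemma fps_coeffs_in_deriv:
  "is_subring A \<Longrightarrow> fps_coeffs_in A f \<Longrightarrow> fps_coeffs_in A (fps_deriv f)"
  unfolding fps_coeffs_in_def fps_deriv_nth by (metis subring_mult subring_of_nat)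

lemma fps_coeffs_in_inverse:
  fixes f :: "'a :: field fps"
  assumes A: "is_subring A" and f: "fps_coeffs_in A f"
    and f0: "f $ 0 \<noteq> 0" "inverse (f $ 0) \<in> A"
  shows "fps_coeffs_in A (inverse f)"
  unfolding fps_coeffs_in_def
proof
  fix n show "inverse f $ n \<in> A"
  proof (induction n rule: less_induct)
    case (less n)
    show ?case
    proof (cases n)
      case 0 then show ?thesis using f0 by simp
    next
      case (Suc m)
      have "(inverse f * f) $ n = 0" using inverse_mult_eq_1[OF f0(1)] Suc by simp
      then have "(\<Sum>i = 0..m. inverse f $ i * f $ (n - i)) + inverse f $ n * f $ 0 = 0"
        using Suc by (simp add: fps_mult_nth)
      then have eq: "inverse f $ n = - (\<Sum>i = 0..m. inverse f $ i * f $ (n - i)) * inverse (f $ 0)"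
        using f0(1) by (simp add: field_simps eq_neg_iff_add_eq_0)
      have "(\<Sum>i = 0..m. inverse f $ i * f $ (n - i)) \<in> A"
        using f less Suc unfolding fps_coeffs_in_def by (auto intro!: subring_sum subring_mult A)
      then show ?thesis unfolding eq using A f0 by (intro subring_mult subring_uminus)
    qed
  qed
qed

lemma fps_coeffs_in_Rats_if_deriv_eq:
  fixes F R :: "'a :: field_char_0 fps"
  assumes F0: "F $ 0 \<in> \<rat>" and R: "fps_coeffs_in \<rat> R" and eq: "fps_deriv F = F * R"
  shows "fps_coeffs_in \<rat> F"
  unfolding fps_coeffs_in_def
proof
  fix n show "F $ n \<in> \<rat>"
  proof (induction n rule: less_induct)
    case (less n)
    show ?case
    proof (cases n)
      case 0 then show ?thesis using F0 by simp
    next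
      case (Suc m)
      have "of_nat (Suc m) * F $ n = (\<Sum>i = 0..m. F $ i * R $ (m - i))"
        using arg_cong[OF eq, of "\<lambda>f. f $ m"] Suc by (simp add: fps_mult_nth)
      then have eq2: "F $ n = (\<Sum>i = 0..m. F $ i * R $ (m - i)) / of_nat (Suc m)"
        by (simp add: field_simps del: of_nat_Suc)
      have "(\<Sum>i = 0..m. F $ i * R $ (m - i)) \<in> \<rat>"
        using R less Suc unfolding fps_coeffs_in_def by (auto intro!: subring_sum subring_mult is_subring_Rats)
      then show ?thesis unfolding eq2 by simp
    qed
  qed
qed

definition power_sum :: "'b set \<Rightarrow> ('b \<Rightarrow> 'a :: comm_semiring_1) \<Rightarrow> nat \<Rightarrow> 'a" where
  "power_sum I x k = (\<Sum>i\<in>I. x i ^ k)"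

definition elem_sym_fps :: "'b set \<Rightarrow> ('b \<Rightarrow> 'a :: comm_ring_1) \<Rightarrow> 'a fps" where
  "elem_sym_fps I x = (\<Prod>i\<in>I. 1 - fps_const (x i) * fps_X)"

lemma elem_sym_fps_nth_0 [simp]: "elem_sym_fps I x $ 0 = 1"
  unfolding elem_sym_fps_def by (induction I rule: infinite_finite_induct) auto

lemma one_minus_const_X_mult_geometric:
  "(1 - fps_const c * fps_X) * Abs_fps (\<lambda>n. c ^ Suc n) = (fps_const c :: 'a :: comm_ring_1 fps)"
proof (rule fps_ext)
  fix n show "((1 - fps_const c * fps_X) * Abs_fps (\<lambda>n. c ^ Suc n)) $ n = fps_const c $ n"
    by (cases n) (simp_all add: algebra_simps)
qed

lemma fps_deriv_elem_sym_fps: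
  fixes x :: "'b \<Rightarrow> 'a :: comm_ring_1"
  assumes "finite I"
  shows "fps_deriv (elem_sym_fps I x) = elem_sym_fps I x * Abs_fps (\<lambda>n. - power_sum I x (Suc n))"
  using assms
proof (induction I rule: finite_induct)
  case empty
  have "Abs_fps (\<lambda>n. - power_sum {} x (Suc n)) = 0" by (rule fps_ext) (simp add: power_sum_def)
  then show ?case by (simp add: elem_sym_fps_def)
next
  case (insert a I)
  define L where "L = 1 - fps_const (x a) * fps_X"
  define E where "E = elem_sym_fps I x"
  define G where "G = Abs_fps (\<lambda>n. x a ^ Suc n)"
  define S where "S = Abs_fps (\<lambda>n. - power_sum I x (Suc n))"
  have "fps_deriv (elem_sym_fps (insert a I) x) = fps_deriv (L * E)"
    using insert by (simp add: elem_sym_fps_def L_def E_def)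
  also have "\<dots> = L * E * S - fps_const (x a) * E"
    by (simp add: insert.IH L_def E_def S_def algebra_simps)
  also have "fps_const (x a) = L * G"
    unfolding L_def G_def by (rule one_minus_const_X_mult_geometric[symmetric])
  also have "L * E * S - L * G * E = L * E * (S - G)"
    by (simp add: algebra_simps)
  also have "S - G = Abs_fps (\<lambda>n. - power_sum (insert a I) x (Suc n))"
    using insert by (intro fps_ext) (simp add: power_sum_def S_def G_def)
  also have "L * E = elem_sym_fps (insert a I) x"
    using insert by (simp add: elem_sym_fps_def L_def E_def)
  finally show ?case .
qed

lemma power_sum_in_subring:
  fixes x :: "'b \<Rightarrow> 'a :: field"
  assumes I: "finite I" and A: "is_subring A" and E: "fps_coeffs_in A (elem_sym_fps I x)"
  shows "power_sum I x (Suc n) \<in> A"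
proof -
  have "fps_coeffs_in A (inverse (elem_sym_fps I x))"
    using A E by (intro fps_coeffs_in_inverse) (auto simp: is_subring_def)
  then have "fps_coeffs_in A (inverse (elem_sym_fps I x) * fps_deriv (elem_sym_fps I x))"
    using A E by (intro fps_coeffs_in_mult fps_coeffs_in_deriv)
  also have "inverse (elem_sym_fps I x) * fps_deriv (elem_sym_fps I x) =
      Abs_fps (\<lambda>n. - power_sum I x (Suc n))"
    unfolding fps_deriv_elem_sym_fps[OF I] mult.assoc[symmetric]
    by (simp add: inverse_mult_eq_1)
  finally have "- power_sum I x (Suc n) \<in> A" unfolding fps_coeffs_in_def by auto
  then show ?thesis using subring_uminus[OF A] by fastforce
qed

lemma elem_sym_fps_coeffs_in_Rats:
  fixes x :: "'b \<Rightarrow> 'a :: field_char_0"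
  assumes "finite I" "\<And>n. power_sum I x (Suc n) \<in> \<rat>"
  shows "fps_coeffs_in \<rat> (elem_sym_fps I x)"
  by (rule fps_coeffs_in_Rats_if_deriv_eq)
    (use assms in \<open>auto simp: fps_deriv_elem_sym_fps fps_coeffs_in_def\<close>)

definition logistic_fps :: "'a :: field_char_0 fps" where
  "logistic_fps = fps_exp 1 * inverse (1 + fps_exp 1)"

lemma fps_coeffs_in_Rats_logistic_fps: "fps_coeffs_in \<rat> logistic_fps"
proof -
  have E: "fps_coeffs_in \<rat> (fps_exp 1)"
    unfolding fps_coeffs_in_def fps_exp_nth by (metis Rats_divide Rats_power Rats_1 Rats_of_nat)
  have "fps_coeffs_in \<rat> (inverse (1 + fps_exp 1))"
    using E by (intro fps_coeffs_in_inverse fps_coeffs_in_add is_subring_Rats)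
      (auto simp: fps_coeffs_in_def)
  then show ?thesis unfolding logistic_fps_def by (intro fps_coeffs_in_mult is_subring_Rats E)
qed

lemma logistic_fps_compose_linear:
  "(1 + fps_exp c) * (logistic_fps oo (fps_const c * fps_X)) = fps_exp (c :: 'a :: field_char_0)"
proof -
  have "(1 + fps_exp 1) * logistic_fps = (fps_exp 1 :: 'a fps)"
    unfolding logistic_fps_def using inverse_mult_eq_1[of "1 + fps_exp (1::'a)"] by (simp add: ac_simps)
  then have "((1 + fps_exp 1) * logistic_fps) oo (fps_const c * fps_X) = fps_exp c"
    by simp
  then show ?thesis by (simp add: fps_compose_mult_distrib fps_compose_add_distrib)
qed

definition exp_prod_fps :: "'b set \<Rightarrow> ('b \<Rightarrow> 'a :: field_char_0) \<Rightarrow> 'a fps" where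
  "exp_prod_fps I x = (\<Prod>i\<in>I. 1 + fps_exp (x i))"

text \<open>The logarithmic derivative of \<open>1 + e\<^sup>c\<^sup>X\<close> is \<open>c\<sigma>(cX)\<close> with the logistic series \<open>\<sigma>\<close>,
  so the power sums of the \<open>x i\<close> control the logarithmic derivative of the product.\<close>
lemma fps_deriv_exp_prod_fps:
  assumes "finite I"
  shows "fps_deriv (exp_prod_fps I x) =
    exp_prod_fps I x * Abs_fps (\<lambda>n. power_sum I x (Suc n) * logistic_fps $ n)"
  using assms
proof (induction I rule: finite_induct)
  case empty
  have "Abs_fps (\<lambda>n. power_sum {} x (Suc n) * logistic_fps $ n) = 0"
    by (rule fps_ext) (simp add: power_sum_def)
  then show ?case by (simp add: exp_prod_fps_def)
next
  case (insert a I)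
  define L where "L = 1 + fps_exp (x a)"
  define P where "P = exp_prod_fps I x"
  define T where "T = Abs_fps (\<lambda>n. x a ^ Suc n * logistic_fps $ n)"
  define S where "S = Abs_fps (\<lambda>n. power_sum I x (Suc n) * logistic_fps $ n)"
  have "fps_deriv (exp_prod_fps (insert a I) x) = fps_deriv (L * P)"
    using insert by (simp add: exp_prod_fps_def L_def P_def)
  also have "\<dots> = fps_const (x a) * fps_exp (x a) * P + L * P * S"
    by (simp add: insert.IH L_def P_def S_def algebra_simps)
  also have "fps_const (x a) * fps_exp (x a) = L * T"
  proof -
    have "T = fps_const (x a) * (logistic_fps oo (fps_const (x a) * fps_X))"
      unfolding T_def fps_compose_linear by (rule fps_ext) simp
    then show ?thesis
      unfolding L_def using logistic_fps_compose_linear[of "x a"] by (metis mult.left_commute)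
  qed
  also have "L * T * P + L * P * S = L * P * (T + S)"
    by (simp add: algebra_simps)
  also have "T + S = Abs_fps (\<lambda>n. power_sum (insert a I) x (Suc n) * logistic_fps $ n)"
    using insert by (intro fps_ext) (simp add: power_sum_def T_def S_def algebra_simps)
  also have "L * P = exp_prod_fps (insert a I) x"
    using insert by (simp add: exp_prod_fps_def L_def P_def)
  finally show ?case .
qed

lemma exp_prod_fps_eq_sum_Pow:
  assumes "finite I"
  shows "exp_prod_fps I x = (\<Sum>X\<in>Pow I. fps_exp (sum x X))"
proof -
  have "exp_prod_fps I x = (\<Prod>i\<in>I. fps_exp (x i) + 1)"
    unfolding exp_prod_fps_def by (simp add: add.commute)
  also have "\<dots> = (\<Sum>X\<in>Pow I. (\<Prod>i\<in>X. fps_exp (x i)) * (\<Prod>i\<in>I - X. 1))"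
    by (rule prod_add[OF assms])
  also have "\<dots> = (\<Sum>X\<in>Pow I. fps_exp (sum x X))"
  proof (intro sum.cong refl)
    fix X assume "X \<in> Pow I"
    then have "finite X" using assms by (auto intro: finite_subset)
    then show "(\<Prod>i\<in>X. fps_exp (x i)) * (\<Prod>i\<in>I - X. 1) = fps_exp (sum x X)"
      by (induction X rule: finite_induct) (simp_all add: fps_exp_add_mult)
  qed
  finally show ?thesis .
qed

lemma subset_sums_power_sum_Rats:
  fixes x :: "'b \<Rightarrow> 'a :: field_char_0"
  assumes I: "finite I" and x: "\<And>n. power_sum I x (Suc n) \<in> \<rat>"
  shows "power_sum (Pow I) (sum x) n \<in> \<rat>"
proof -
  have "fps_coeffs_in \<rat> (exp_prod_fps I x)"
  proof (rule fps_coeffs_in_Rats_if_deriv_eq)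
    show "exp_prod_fps I x $ 0 \<in> \<rat>"
      unfolding exp_prod_fps_eq_sum_Pow[OF I] fps_sum_nth by (simp add: Rats_sum)
    show "fps_coeffs_in \<rat> (Abs_fps (\<lambda>n. power_sum I x (Suc n) * logistic_fps $ n))"
      using x fps_coeffs_in_Rats_logistic_fps unfolding fps_coeffs_in_def by (auto intro: Rats_mult)
  qed (rule fps_deriv_exp_prod_fps[OF I])
  then have "exp_prod_fps I x $ n * fact n \<in> \<rat>"
    unfolding fps_coeffs_in_def by (metis Rats_mult Rats_of_nat of_nat_fact)
  also have "exp_prod_fps I x $ n * fact n = power_sum (Pow I) (sum x) n"
    unfolding exp_prod_fps_eq_sum_Pow[OF I] fps_sum_nth power_sum_def
    by (simp flip: sum_divide_distrib)
  finally show ?thesis .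
qed

lemma fps_of_poly_linear: "fps_of_poly [:1, - a:] = 1 - fps_const (a :: 'a :: comm_ring_1) * fps_X"
  by (rule fps_ext) (auto simp: coeff_pCons split: nat.split)

lemma reflect_poly_linear: "b \<noteq> 0 \<Longrightarrow> reflect_poly [:a, b:] = [:b, a:]"
  by (rule poly_eqI) (auto simp: coeff_reflect_poly coeff_pCons split: nat.split)

definition int_coeffs :: "'a :: comm_ring_1 poly \<Rightarrow> bool" where
  "int_coeffs p \<longleftrightarrow> (\<forall>k. coeff p k \<in> \<int>)"

lemma int_coeffs_mult: "int_coeffs p \<Longrightarrow> int_coeffs q \<Longrightarrow> int_coeffs (p * q)"
  unfolding int_coeffs_def by (auto intro!: coeff_mult_semiring_closed)

lemma int_coeffs_1: "int_coeffs 1"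
  by (simp add: int_coeffs_def coeff_1)

lemma int_coeffs_prod: "(\<And>i. i \<in> S \<Longrightarrow> int_coeffs (f i)) \<Longrightarrow> int_coeffs (prod f S)"
  by (induction S rule: infinite_finite_induct) (simp_all add: int_coeffs_1 int_coeffs_mult)

lemma int_coeffs_power: "int_coeffs p \<Longrightarrow> int_coeffs (p ^ n)"
  using int_coeffs_prod[of "{..<n}" "\<lambda>_. p"] by simp

lemma int_coeffs_sum: "(\<And>i. i \<in> S \<Longrightarrow> int_coeffs (f i)) \<Longrightarrow> int_coeffs (sum f S)"
  unfolding int_coeffs_def coeff_sum by (auto intro!: Ints_sum)

lemma int_coeffs_smult: "x \<in> \<int> \<Longrightarrow> int_coeffs p \<Longrightarrow> int_coeffs (smult x p)"
  unfolding int_coeffs_def by (auto intro!: Ints_mult)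

lemma int_coeffs_monom: "x \<in> \<int> \<Longrightarrow> int_coeffs (monom x n)"
  unfolding int_coeffs_def by (simp add: coeff_monom)

lemma int_coeffs_linear: "a \<in> \<int> \<Longrightarrow> int_coeffs [:a, 1:]"
  unfolding int_coeffs_def by (auto simp: coeff_pCons split: nat.split)

lemma power_sum_in_subring_if_coeffs:
  fixes \<beta> :: "'b \<Rightarrow> 'a :: field"
  assumes J: "finite J" and A: "is_subring A" and R: "\<And>k. coeff (\<Prod>j\<in>J. [:- \<beta> j, 1:]) k \<in> A"
  shows "power_sum J \<beta> (Suc n) \<in> A"
proof (rule power_sum_in_subring[OF J A])
  have "fps_of_poly (reflect_poly (\<Prod>j\<in>J. [:- \<beta> j, 1:])) = elem_sym_fps J \<beta>"
    by (simp add: reflect_poly_prod reflect_poly_linear fps_of_poly_prod fps_of_poly_linear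
        elem_sym_fps_def)
  moreover have "0 \<in> A" using A by (simp add: is_subring_def)
  ultimately show "fps_coeffs_in A (elem_sym_fps J \<beta>)"
    using R unfolding fps_coeffs_in_def by (metis coeff_reflect_poly fps_of_poly_nth)
qed

lemma power_sum_Ints_if_int_coeffs:
  fixes \<beta> :: "'b \<Rightarrow> 'a :: field_char_0"
  assumes J: "finite J" and R: "int_coeffs (\<Prod>j\<in>J. [:- \<beta> j, 1:])"
  shows "power_sum J \<beta> n \<in> \<int>"
  using power_sum_in_subring_if_coeffs[OF J is_subring_Ints] R
  by (cases n) (auto simp: power_sum_def int_coeffs_def)

lemma Rats_coeffs_scale_to_Ints:
  fixes p :: "'a :: field_char_0 poly"
  assumes "\<And>k. coeff p k \<in> \<rat>" "coeff p 0 \<in> \<int>"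
  obtains c :: nat where "c > 0" "\<And>k. of_nat c ^ k * coeff p k \<in> \<int>"
proof -
  have "\<exists>d::nat. d > 0 \<and> of_nat d * coeff p k \<in> \<int>" for k
  proof -
    obtain a b where "b > 0" "coeff p k = of_int a / of_int b"
      using Rats_cases'[OF assms(1)[of k]] by metis
    then show ?thesis by (intro exI[of _ "nat b"]) auto
  qed
  then obtain d where d: "\<And>k. d k > 0" "\<And>k. of_nat (d k) * coeff p k \<in> \<int>" by metis
  define c where "c = (\<Prod>k\<le>degree p. d k)"
  have "of_nat c ^ k * coeff p k \<in> \<int>" for k
  proof (cases "k = 0 \<or> degree p < k")
    case True then show ?thesis using assms(2) by (auto simp: coeff_eq_0)
  next
    case False
    then obtain e where e: "c = d k * e" unfolding c_def by (metis atMost_iff dvd_prodI finite_atMost not_less dvdE)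
    from False have "of_nat c ^ k * coeff p k = of_nat c ^ (k - 1) * of_nat e * (of_nat (d k) * coeff p k)"
      unfolding e by (cases k) (auto simp: algebra_simps)
    then show ?thesis using d(2)[of k] by (metis Ints_mult Ints_of_nat Ints_power)
  qed
  moreover have "c > 0" unfolding c_def using d(1) by (simp add: prod_pos)
  ultimately show ?thesis using that by blast
qed

lemma scaled_roots_int_coeffs:
  fixes \<theta> :: "'b \<Rightarrow> 'a :: field_char_0"
  assumes J: "finite J" and nz: "\<And>j. j \<in> J \<Longrightarrow> \<theta> j \<noteq> 0"
    and PS: "\<And>n. power_sum J \<theta> (Suc n) \<in> \<rat>"
  obtains c :: nat where "c > 0" "int_coeffs (\<Prod>j\<in>J. [:- (of_nat c * \<theta> j), 1:])"
proof -
  define \<Phi> where "\<Phi> = (\<Prod>j\<in>J. [:1, - \<theta> j:])"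
  have "fps_of_poly \<Phi> = elem_sym_fps J \<theta>"
    unfolding \<Phi>_def fps_of_poly_prod elem_sym_fps_def by (simp add: fps_of_poly_linear)
  then have "coeff \<Phi> k \<in> \<rat>" for k
    using elem_sym_fps_coeffs_in_Rats[OF J PS] unfolding fps_coeffs_in_def by (metis fps_of_poly_nth)
  moreover have "coeff \<Phi> 0 = 1" unfolding \<Phi>_def poly_0_coeff_0[symmetric] by (simp add: poly_prod)
  ultimately obtain c :: nat where c: "c > 0" "\<And>k. of_nat c ^ k * coeff \<Phi> k \<in> \<int>"
    by (elim Rats_coeffs_scale_to_Ints) auto
  define \<Psi> where "\<Psi> = (\<Prod>j\<in>J. [:1, - (of_nat c * \<theta> j):])"
  have "\<Psi> = pcompose \<Phi> [:0, of_nat c:]"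
    unfolding \<Psi>_def \<Phi>_def pcompose_prod by (intro prod.cong refl) (simp add: pcompose_pCons)
  then have "int_coeffs \<Psi>" unfolding int_coeffs_def using c(2) by (simp add: coeff_pcompose_linear)
  moreover have "reflect_poly \<Psi> = (\<Prod>j\<in>J. [:- (of_nat c * \<theta> j), 1:])"
    unfolding \<Psi>_def reflect_poly_prod using nz c(1) by (intro prod.cong refl) (simp add: reflect_poly_linear)
  ultimately have "int_coeffs (\<Prod>j\<in>J. [:- (of_nat c * \<theta> j), 1:])"
    unfolding int_coeffs_def by (metis coeff_reflect_poly Ints_0)
  with c(1) show ?thesis by (rule that)
qed

section \<open>Higher derivatives and Hermite's identity\<close>

lemma higher_pderiv_pcompose_linear:
  "(pderiv ^^ i) (pcompose g [:0, a:]) = smult (a ^ i) (pcompose ((pderiv ^^ i) g) [:0, a :: 'a :: idom:])"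
proof (induction i)
  case (Suc i)
  have "(pderiv ^^ Suc i) (pcompose g [:0, a:]) = smult (a ^ i) (pcompose (pderiv ((pderiv ^^ i) g)) [:0, a:] * [:a:])"
    using Suc by (simp add: pderiv_smult pderiv_pcompose pderiv_pCons)
  then show ?case by (simp add: mult.commute)
qed simp

lemma higher_pderiv_power_mult_dvd:
  fixes p g :: "'a :: idom poly"
  assumes "i \<le> m"
  shows "p ^ (m - i) dvd (pderiv ^^ i) (p ^ m * g)"
  using assms
proof (induction i)
  case (Suc i)
  define k where "k = m - Suc i"
  have "m - i = Suc k" using Suc.prems unfolding k_def by arith
  then obtain h where h: "(pderiv ^^ i) (p ^ m * g) = p ^ Suc k * h"
    using Suc by (auto elim: dvdE)
  have "(pderiv ^^ Suc i) (p ^ m * g) = pderiv (p ^ Suc k * h)"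
    using h by simp
  also have "\<dots> = p ^ k * (p * pderiv h + smult (of_nat (Suc k)) (pderiv p * h))"
    by (simp only: pderiv_mult pderiv_power_Suc) (simp add: algebra_simps)
  finally show ?case unfolding k_def by simp
qed simp

lemma poly_higher_pderiv_at_root:
  fixes a :: "'a :: idom"
  assumes "i < m"
  shows "poly ((pderiv ^^ i) ([:-a, 1:] ^ m * g)) a = 0"
proof -
  obtain h where "(pderiv ^^ i) ([:-a, 1:] ^ m * g) = [:-a, 1:] ^ (m - i) * h"
    using higher_pderiv_power_mult_dvd[OF less_imp_le[OF assms], of "[:-a, 1:]" g] by (auto elim!: dvdE)
  then show ?thesis using assms by (simp add: poly_power)
qed

lemma poly_higher_pderiv_0: "poly ((pderiv ^^ i) h) 0 = fact i * coeff h i"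
  by (simp add: poly_0_coeff_0 coeff_higher_pderiv pochhammer_fact)

lemma coeff_higher_pderiv_eq_fact_mult:
  "coeff ((pderiv ^^ i) h) k = fact i * (of_nat ((k + i) choose i) * coeff h (k + i :: nat))"
  for h :: "'a :: field_char_0 poly"
proof -
  have "pochhammer (of_nat (Suc k) :: 'a) i = fact i * (of_nat (k + i) gchoose i)"
    by (simp add: gbinomial_pochhammer' add_ac)
  then show ?thesis by (simp add: coeff_higher_pderiv binomial_gbinomial)
qed

text \<open>The \<open>i\<close>-th derivative of an integer polynomial has coefficients divisible by \<open>i!\<close>.\<close>
lemma sum_poly_higher_pderiv_in_fact_Ints:
  fixes h :: "'a :: field_char_0 poly"
  assumes h: "int_coeffs h" and PS: "\<And>n. power_sum J \<beta> n \<in> \<int>"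
  shows "\<exists>z\<in>\<int>. (\<Sum>j\<in>J. poly ((pderiv ^^ i) h) (\<beta> j)) = fact i * z"
proof -
  define g where "g = (pderiv ^^ i) h"
  have "(\<Sum>j\<in>J. poly g (\<beta> j)) = (\<Sum>k\<le>degree g. coeff g k * power_sum J \<beta> k)"
    unfolding poly_altdef power_sum_def by (subst sum.swap) (simp add: sum_distrib_left)
  also have "\<dots> = fact i * (\<Sum>k\<le>degree g. of_nat ((k + i) choose i) * coeff h (k + i) * power_sum J \<beta> k)"
    unfolding g_def coeff_higher_pderiv_eq_fact_mult by (simp add: sum_distrib_left mult.assoc)
  finally show ?thesis
    using h PS unfolding g_def int_coeffs_def by (blast intro: Ints_sum Ints_mult Ints_of_nat)
qed

definition pderiv_sum :: "'a :: idom poly \<Rightarrow> 'a poly" where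
  "pderiv_sum f = (\<Sum>i\<le>degree f. (pderiv ^^ i) f)"

lemma higher_pderiv_eq_0: "degree f < i \<Longrightarrow> (pderiv ^^ i) f = 0"
  by (rule poly_eqI) (simp add: coeff_higher_pderiv coeff_eq_0)

lemma pderiv_sum_eq_atMost:
  assumes "degree f \<le> N"
  shows "pderiv_sum f = (\<Sum>i\<le>N. (pderiv ^^ i) f)"
proof -
  have "(\<Sum>i\<le>N. (pderiv ^^ i) f) = pderiv_sum f + (\<Sum>i\<in>{degree f<..N}. (pderiv ^^ i) f)"
    unfolding pderiv_sum_def using assms
    by (subst sum.union_disjoint[symmetric]) (auto intro!: sum.cong)
  also have "(\<Sum>i\<in>{degree f<..N}. (pderiv ^^ i) f) = 0"
    by (intro sum.neutral) (auto intro: higher_pderiv_eq_0)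
  finally show ?thesis by simp
qed

lemma pderiv_sum_eq: "pderiv_sum f = f + pderiv (pderiv_sum f)"
  for f :: "'a :: idom poly"
proof -
  have "pderiv (pderiv_sum f) = (\<Sum>i\<le>degree f. (pderiv ^^ Suc i) f)"
    unfolding pderiv_sum_def using higher_pderiv_sum[of 1] by simp
  also have "\<dots> = (\<Sum>i\<le>Suc (degree f). (pderiv ^^ i) f) - f"
    by (subst sum.atMost_Suc_shift) simp
  also have "(\<Sum>i\<le>Suc (degree f). (pderiv ^^ i) f) = pderiv_sum f"
    by (rule pderiv_sum_eq_atMost[symmetric]) simp
  finally show ?thesis by simp
qed

text \<open>Hermite's identity: \<open>e\<^sup>-\<^sup>z F(z)\<close> has derivative \<open>-e\<^sup>-\<^sup>z f(z)\<close> for \<open>F = pderiv_sum f\<close>.\<close>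
lemma norm_pderiv_sum_diff_le:
  fixes f :: "complex poly" and \<theta> :: complex
  assumes B: "\<And>z. z \<in> closed_segment 0 \<theta> \<Longrightarrow> norm (exp (- z) * poly f z) \<le> B"
  shows "norm (poly (pderiv_sum f) \<theta> - exp \<theta> * poly (pderiv_sum f) 0) \<le> exp (norm \<theta>) * B * norm \<theta>"
proof -
  define G where "G z = exp (- z) * poly (pderiv_sum f) z" for z
  have "(G has_field_derivative (- (exp (- z) * poly f z))) (at z within closed_segment 0 \<theta>)" for z
  proof -
    have "(G has_field_derivative (exp (- z) * (poly (pderiv (pderiv_sum f)) z - poly (pderiv_sum f) z))) (at z)"
      unfolding G_def by (auto intro!: derivative_eq_intros poly_DERIV simp: algebra_simps)
    also have "poly (pderiv (pderiv_sum f)) z - poly (pderiv_sum f) z = - poly f z"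
      by (subst (2) pderiv_sum_eq) simp
    finally show ?thesis by (simp add: has_field_derivative_at_within)
  qed
  then have "norm (G \<theta> - G 0) \<le> B * norm (\<theta> - 0)"
    by (rule field_differentiable_bound[OF convex_closed_segment]) (use B in auto)
  moreover have "poly (pderiv_sum f) \<theta> - exp \<theta> * poly (pderiv_sum f) 0 = exp \<theta> * (G \<theta> - G 0)"
    unfolding G_def by (simp add: exp_minus field_simps)
  ultimately have "norm (poly (pderiv_sum f) \<theta> - exp \<theta> * poly (pderiv_sum f) 0) =
      norm (exp \<theta>) * norm (G \<theta> - G 0)"
    by (simp add: norm_mult)
  also have "\<dots> \<le> exp (norm \<theta>) * (B * norm \<theta>)"
    using \<open>norm (G \<theta> - G 0) \<le> B * norm (\<theta> - 0)\<close> by (intro mult_mono[OF norm_exp]) auto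
  finally show ?thesis by (simp add: mult.assoc)
qed

section \<open>Niven's polynomials\<close>

definition int_multiples :: "nat \<Rightarrow> 'a :: comm_ring_1 set" where
  "int_multiples p = {of_nat p * z | z. z \<in> \<int>}"

lemma int_multiplesI: "z \<in> \<int> \<Longrightarrow> x = of_nat p * z \<Longrightarrow> x \<in> int_multiples p"
  unfolding int_multiples_def by auto

lemma int_multiples_0: "0 \<in> int_multiples p"
  by (rule int_multiplesI[of 0]) auto

lemma int_multiples_add:
  assumes "x \<in> int_multiples p" "y \<in> int_multiples p"
  shows "x + y \<in> int_multiples p"
proof -
  obtain a b where "a \<in> \<int>" "b \<in> \<int>" "x = of_nat p * a" "y = of_nat p * b"
    using assms unfolding int_multiples_def by blast
  then show ?thesis by (intro int_multiplesI[of "a + b"]) (simp_all add: distrib_left)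
qed

lemma int_multiples_sum: "(\<And>i. i \<in> I \<Longrightarrow> f i \<in> int_multiples p) \<Longrightarrow> sum f I \<in> int_multiples p"
  by (induction I rule: infinite_finite_induct) (auto intro: int_multiples_0 int_multiples_add)

lemma int_multiples_mult_Ints:
  assumes "x \<in> int_multiples p" "y \<in> \<int>"
  shows "x * y \<in> int_multiples p"
proof -
  obtain a where "a \<in> \<int>" "x = of_nat p * a"
    using assms(1) unfolding int_multiples_def by blast
  then show ?thesis using assms(2) by (intro int_multiplesI[of "a * y"]) simp_all
qed

text \<open>Niven's polynomial \<open>x\<^sup>p\<^sup>-\<^sup>1 R(cx)\<^sup>p / (p-1)!\<close>. Its derivatives at \<open>0\<close> are multiples of \<open>p\<close>,
  except the \<open>(p-1)\<close>-st, which is \<open>R(0)\<^sup>p\<close>; for each order, the sum of its derivatives at the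
  roots \<open>\<beta> j / c\<close> of \<open>R(cx)\<close> is a multiple of \<open>p\<close>.\<close>
definition niven_poly :: "complex poly \<Rightarrow> nat \<Rightarrow> nat \<Rightarrow> complex poly" where
  "niven_poly R c p =
     smult (1 / (fact (p - 1) * of_nat c ^ (p - 1))) (pcompose (monom 1 (p - 1) * R ^ p) [:0, of_nat c:])"

lemma poly_higher_pderiv_niven_poly:
  "poly ((pderiv ^^ i) (niven_poly R c p)) z =
     of_nat c ^ i / (fact (p - 1) * of_nat c ^ (p - 1)) *
     poly ((pderiv ^^ i) (monom 1 (p - 1) * R ^ p)) (of_nat c * z)"
  unfolding niven_poly_def higher_pderiv_smult higher_pderiv_pcompose_linear
  by (simp add: poly_pcompose mult.commute)

lemma niven_factor_in_int_multiples:
  assumes "p \<le> i" "c > 0" "p > 0"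
  shows "(of_nat c ^ i / (fact (p - 1) * of_nat c ^ (p - 1)) * fact i :: complex) \<in> int_multiples p"
proof (rule int_multiplesI)
  define A :: complex where "A = of_nat c ^ (p - 1)"
  define B :: complex where "B = fact (p - 1)"
  have f1: "fact i = fact p * (fact i div fact p :: nat)"
    using fact_dvd[OF assms(1), where 'a=nat] by (simp add: dvd_mult_div_cancel)
  have f2: "(fact p :: nat) = p * fact (p - 1)"
    using fact_reduce[OF assms(3), where 'a=nat] by simp
  have "(fact i :: complex) = of_nat (fact i)" by simp
  also have "\<dots> = of_nat (p * fact (p - 1) * (fact i div fact p))"
    by (subst f1, subst f2) (rule refl)
  also have "\<dots> = of_nat p * B * of_nat (fact i div fact p)"
    unfolding B_def by (simp only: of_nat_mult of_nat_fact)
  finally have fi: "(fact i :: complex) = of_nat p * B * of_nat (fact i div fact p)" .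
  have "i = (p - 1) + (i - (p - 1))" using assms by arith
  then have ci: "(of_nat c ^ i :: complex) = A * of_nat c ^ (i - (p - 1))"
    unfolding A_def by (metis power_add)
  have "A \<noteq> 0" "B \<noteq> 0" unfolding A_def B_def using assms by auto
  then show "(of_nat c ^ i / (fact (p - 1) * of_nat c ^ (p - 1)) * fact i :: complex) =
      of_nat p * (of_nat c ^ (i - (p - 1)) * of_nat (fact i div fact p))"
    unfolding ci fi A_def[symmetric] B_def[symmetric] by (simp add: field_simps)
qed (intro Ints_mult Ints_power Ints_of_nat)

lemma poly_higher_pderiv_niven_poly_0:
  assumes R: "int_coeffs R" and r: "coeff R 0 = of_int r" and c: "c > 0" and p: "p > 0"
  shows "poly ((pderiv ^^ i) (niven_poly R c p)) 0 - (if i = p - 1 then of_int r ^ p else 0)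
           \<in> int_multiples p"
proof -
  define a :: complex where "a = of_nat c ^ i / (fact (p - 1) * of_nat c ^ (p - 1)) * fact i"
  have val: "poly ((pderiv ^^ i) (niven_poly R c p)) 0 =
      a * (if i < p - 1 then 0 else coeff (R ^ p) (i - (p - 1)))"
    unfolding poly_higher_pderiv_niven_poly a_def by (simp add: poly_higher_pderiv_0 coeff_monom_mult)
  consider "i < p - 1" | "i = p - 1" | "p \<le> i" by linarith
  then show ?thesis
  proof cases
    case 1 then show ?thesis unfolding val by (simp add: int_multiples_0)
  next
    case 2 then show ?thesis using c unfolding val a_def by (simp add: coeff_0_power r int_multiples_0)
  next
    case 3
    have "a \<in> int_multiples p" unfolding a_def using 3 c p by (rule niven_factor_in_int_multiples)
    moreover have "coeff (R ^ p) (i - (p - 1)) \<in> \<int>"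
      using int_coeffs_power[OF R] unfolding int_coeffs_def by blast
    moreover have "\<not> i < p - 1" "i \<noteq> p - 1" using 3 p by auto
    ultimately show ?thesis unfolding val by (simp add: int_multiples_mult_Ints)
  qed
qed

lemma sum_poly_higher_pderiv_niven_poly_roots:
  fixes \<beta> :: "'a \<Rightarrow> complex"
  assumes J: "finite J" and R: "R = (\<Prod>j\<in>J. [:-\<beta> j, 1:])" "int_coeffs R"
    and c: "c > 0" and p: "p > 0"
  shows "(\<Sum>j\<in>J. poly ((pderiv ^^ i) (niven_poly R c p)) (\<beta> j / of_nat c)) \<in> int_multiples p"
proof -
  define a :: complex where "a = of_nat c ^ i / (fact (p - 1) * of_nat c ^ (p - 1))"
  have eq: "(\<Sum>j\<in>J. poly ((pderiv ^^ i) (niven_poly R c p)) (\<beta> j / of_nat c)) =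
      a * (\<Sum>j\<in>J. poly ((pderiv ^^ i) (monom 1 (p - 1) * R ^ p)) (\<beta> j))"
    unfolding poly_higher_pderiv_niven_poly sum_distrib_left a_def using c by simp
  show ?thesis
  proof (cases "i < p")
    case True
    have "poly ((pderiv ^^ i) (monom 1 (p - 1) * R ^ p)) (\<beta> j) = 0" if j: "j \<in> J" for j
    proof -
      have "R = [:-\<beta> j, 1:] * (\<Prod>l\<in>J - {j}. [:-\<beta> l, 1:])"
        unfolding R(1) using J j by (simp add: prod.remove)
      then have "monom 1 (p - 1) * R ^ p =
          [:-\<beta> j, 1:] ^ p * (monom 1 (p - 1) * (\<Prod>l\<in>J - {j}. [:-\<beta> l, 1:]) ^ p)"
        by (simp only: power_mult_distrib mult.commute mult.left_commute)
      then show ?thesis by (simp only: poly_higher_pderiv_at_root[OF True])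
    qed
    then show ?thesis unfolding eq by (simp add: int_multiples_0)
  next
    case False
    have "int_coeffs (monom 1 (p - 1) * R ^ p)"
      by (intro int_coeffs_mult int_coeffs_power int_coeffs_monom R(2)) simp
    then obtain z where z: "z \<in> \<int>"
      "(\<Sum>j\<in>J. poly ((pderiv ^^ i) (monom 1 (p - 1) * R ^ p)) (\<beta> j)) = fact i * z"
      using sum_poly_higher_pderiv_in_fact_Ints power_sum_Ints_if_int_coeffs[OF J R(2)[unfolded R(1)]]
      by blast
    have "a * fact i \<in> int_multiples p"
      unfolding a_def using False c p by (intro niven_factor_in_int_multiples) auto
    then show ?thesis unfolding eq z(2) mult.assoc[symmetric] using z(1) by (rule int_multiples_mult_Ints)
  qed
qed

lemma norm_exp_niven_poly_le:
  fixes \<beta> :: "'a \<Rightarrow> complex"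
  assumes J: "finite J" and R: "R = (\<Prod>j\<in>J. [:-\<beta> j, 1:])" and c: "c > 0" and p: "p > 0"
    and j: "j \<in> J" and M: "M \<ge> 1" "norm (\<beta> j) \<le> M" "(\<Prod>l\<in>J. norm (\<beta> j) + norm (\<beta> l)) \<le> M"
    and z: "z \<in> closed_segment 0 (\<beta> j / of_nat c)"
  shows "norm (exp (- z) * poly (niven_poly R c p) z) \<le> exp (norm (\<beta> j / of_nat c)) * ((M ^ 2) ^ p / fact (p - 1))"
proof -
  have nz: "norm z \<le> norm (\<beta> j / of_nat c)"
    using dist_in_closed_segment[OF z] by (simp add: dist_norm)
  define w where "w = of_nat c * z"
  have nw: "norm w \<le> norm (\<beta> j)"
    using nz c unfolding w_def by (simp add: norm_mult norm_divide field_simps)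
  have "norm (poly R w) = (\<Prod>l\<in>J. norm (w - \<beta> l))"
    unfolding R by (simp add: poly_prod prod_norm)
  also have "\<dots> \<le> (\<Prod>l\<in>J. norm (\<beta> j) + norm (\<beta> l))"
    by (intro prod_mono) (use nw in \<open>auto intro: order_trans[OF norm_triangle_ineq4]\<close>)
  finally have pR: "norm (poly R w) \<le> M" using M(3) by linarith
  have "norm (poly (monom 1 (p - 1) * R ^ p) w) = norm w ^ (p - 1) * norm (poly R w) ^ p"
    by (simp add: poly_monom norm_mult norm_power)
  also have "\<dots> \<le> M ^ (p - 1) * M ^ p"
    using nw M pR by (intro mult_mono power_mono) auto
  also have "\<dots> \<le> M ^ p * M ^ p"
    using M(1) by (intro mult_right_mono power_increasing) auto
  also have "\<dots> = (M ^ 2) ^ p"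
    by (simp add: power_mult_distrib power2_eq_square)
  finally have ph: "norm (poly (monom 1 (p - 1) * R ^ p) w) \<le> (M ^ 2) ^ p" .
  have "norm (poly (niven_poly R c p) z) =
      norm (poly (monom 1 (p - 1) * R ^ p) w) / (fact (p - 1) * of_nat c ^ (p - 1))"
    unfolding niven_poly_def w_def by (simp add: poly_pcompose norm_mult norm_divide norm_power mult.commute)
  also have "\<dots> \<le> norm (poly (monom 1 (p - 1) * R ^ p) w) / fact (p - 1)"
    using c by (intro divide_left_mono) auto
  also have "\<dots> \<le> (M ^ 2) ^ p / fact (p - 1)"
    using ph by (intro divide_right_mono) auto
  finally have "norm (poly (niven_poly R c p) z) \<le> (M ^ 2) ^ p / fact (p - 1)" .
  moreover have "norm (exp (- z)) \<le> exp (norm (\<beta> j / of_nat c))"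
    using norm_exp[of "-z"] nz by (metis norm_minus_cancel order_trans exp_le_cancel_iff)
  ultimately show ?thesis unfolding norm_mult by (intro mult_mono) auto
qed

lemma norm_sum_pderiv_sum_niven_poly_le:
  fixes \<beta> :: "'a \<Rightarrow> complex"
  assumes J: "finite J" and R: "R = (\<Prod>j\<in>J. [:-\<beta> j, 1:])" and c: "c > 0" and p: "p > 0"
    and M: "M \<ge> 1" "\<And>j. j \<in> J \<Longrightarrow> norm (\<beta> j) \<le> M \<and> (\<Prod>l\<in>J. norm (\<beta> j) + norm (\<beta> l)) \<le> M"
  defines "F \<equiv> pderiv_sum (niven_poly R c p)"
  shows "norm (\<Sum>j\<in>J. poly F (\<beta> j / of_nat c) - exp (\<beta> j / of_nat c) * poly F 0) \<le>
    (\<Sum>j\<in>J. exp (norm (\<beta> j / of_nat c)) * exp (norm (\<beta> j / of_nat c)) * norm (\<beta> j / of_nat c)) *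
    ((M ^ 2) ^ p / fact (p - 1))"
proof -
  have "norm (\<Sum>j\<in>J. poly F (\<beta> j / of_nat c) - exp (\<beta> j / of_nat c) * poly F 0) \<le>
      (\<Sum>j\<in>J. exp (norm (\<beta> j / of_nat c)) * (exp (norm (\<beta> j / of_nat c)) * ((M ^ 2) ^ p / fact (p - 1))) *
        norm (\<beta> j / of_nat c))"
    unfolding F_def using M
    by (intro order_trans[OF norm_sum] sum_mono norm_pderiv_sum_diff_le norm_exp_niven_poly_le[OF J R c p]) auto
  also have "\<dots> = (\<Sum>j\<in>J. exp (norm (\<beta> j / of_nat c)) * exp (norm (\<beta> j / of_nat c)) * norm (\<beta> j / of_nat c)) *
      ((M ^ 2) ^ p / fact (p - 1))"
    unfolding sum_distrib_right by (intro sum.cong) auto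
  finally show ?thesis .
qed

section \<open>The transcendence of \<open>\<pi>\<close>\<close>

lemma prime_mult_power_plus_neq_0:
  fixes p q :: nat and r t :: int
  assumes p: "prime p" and q: "0 < q" "q < p" and r: "r \<noteq> 0" "\<bar>r\<bar> < int p"
  shows "int q * r ^ p + int p * t \<noteq> 0"
proof
  assume "int q * r ^ p + int p * t = 0"
  then have "int p dvd int q * r ^ p"
    by (metis add.commute add_0 dvd_triv_left dvd_add_right_iff)
  then have "int p dvd int q \<or> int p dvd r"
    using p by (metis prime_dvd_mult_iff prime_dvd_power prime_nat_int_transfer)
  moreover have "\<not> int p dvd int q"
    using q by (auto dest: dvd_imp_le)
  moreover have "\<not> int p dvd r"
  proof
    assume "int p dvd r"
    then have "int p \<le> \<bar>r\<bar>" using r(1) by (intro zdvd_imp_le) auto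
    then show False using r(2) by simp
  qed
  ultimately show False by blast
qed

lemma niven_sum_eq_nonzero_int:
  fixes \<beta> :: "'a \<Rightarrow> complex"
  assumes J: "finite J" and R: "R = (\<Prod>j\<in>J. [:-\<beta> j, 1:])" "int_coeffs R"
    and r: "coeff R 0 = of_int r" "r \<noteq> 0" and c: "c > 0" and q: "q > 0"
    and p: "prime p" "q < p" "\<bar>r\<bar> < int p"
  defines "F \<equiv> pderiv_sum (niven_poly R c p)"
  obtains k where "k \<noteq> 0" "of_nat q * poly F 0 + (\<Sum>j\<in>J. poly F (\<beta> j / of_nat c)) = of_int k"
proof -
  have p0: "p > 0" using p by (simp add: prime_gt_0_nat)
  define N where "N = max (degree (niven_poly R c p)) p"
  have FN: "F = (\<Sum>i\<le>N. (pderiv ^^ i) (niven_poly R c p))"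
    unfolding F_def by (rule pderiv_sum_eq_atMost) (simp add: N_def)
  have "poly F 0 - of_int r ^ p =
      (\<Sum>i\<le>N. poly ((pderiv ^^ i) (niven_poly R c p)) 0 - (if i = p - 1 then of_int r ^ p else 0))"
    unfolding FN poly_sum sum_subtractf using p0 by (simp add: N_def)
  also have "\<dots> \<in> int_multiples p"
    by (intro int_multiples_sum poly_higher_pderiv_niven_poly_0 R(2) r(1) c p0)
  finally obtain a where a: "a \<in> \<int>" "poly F 0 - of_int r ^ p = of_nat p * a"
    unfolding int_multiples_def by blast
  have "(\<Sum>j\<in>J. poly F (\<beta> j / of_nat c)) =
      (\<Sum>i\<le>N. \<Sum>j\<in>J. poly ((pderiv ^^ i) (niven_poly R c p)) (\<beta> j / of_nat c))"
    unfolding FN poly_sum by (rule sum.swap)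
  also have "\<dots> \<in> int_multiples p"
    by (intro int_multiples_sum sum_poly_higher_pderiv_niven_poly_roots[OF J R c p0])
  finally obtain b where b: "b \<in> \<int>" "(\<Sum>j\<in>J. poly F (\<beta> j / of_nat c)) = of_nat p * b"
    unfolding int_multiples_def by blast
  obtain a' b' where ab: "a = of_int a'" "b = of_int b'" using a(1) b(1) by (auto elim!: Ints_cases)
  show ?thesis
  proof
    show "int q * r ^ p + int p * (int q * a' + b') \<noteq> 0"
      using p q r by (intro prime_mult_power_plus_neq_0) auto
    have "poly F 0 = of_int r ^ p + of_nat p * a" using a(2) by (simp add: algebra_simps)
    then show "of_nat q * poly F 0 + (\<Sum>j\<in>J. poly F (\<beta> j / of_nat c)) =
        of_int (int q * r ^ p + int p * (int q * a' + b'))"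
      unfolding b(2) ab by (simp add: algebra_simps)
  qed
qed

lemma finite_obtain_bound_ge_1:
  fixes g :: "'a \<Rightarrow> real"
  assumes "finite J"
  obtains M where "M \<ge> 1" "\<forall>j\<in>J. g j \<le> M"
proof
  show "1 + (\<Sum>j\<in>J. \<bar>g j\<bar>) \<ge> 1" by (simp add: sum_nonneg)
  show "\<forall>j\<in>J. g j \<le> 1 + (\<Sum>j\<in>J. \<bar>g j\<bar>)"
    using member_le_sum[of _ J "\<lambda>j. \<bar>g j\<bar>"] assms by force
qed

lemma eventually_mult_power_div_fact_less:
  fixes C x :: real
  shows "\<forall>\<^sub>F n in sequentially. C * (x ^ n / fact n) < 1"
proof -
  have "(\<lambda>n. inverse (fact n) * x ^ n) \<longlonglongrightarrow> 0"
    by (rule summable_LIMSEQ_zero[OF summable_exp])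
  then have "(\<lambda>n. C * (x ^ n / fact n)) \<longlonglongrightarrow> C * 0"
    by (intro tendsto_intros) (simp add: field_simps)
  then show ?thesis by (rule order_tendstoD(2)) simp
qed

text \<open>Hermite's argument with Niven's polynomials: for a large prime \<open>p\<close> the quantity
  \<open>q F(0) + \<Sigma>\<^sub>j F(\<beta>\<^sub>j / c)\<close> is a nonzero integer, but if the exponential relation held it
  would equal \<open>\<Sigma>\<^sub>j (F(\<beta>\<^sub>j / c) - e\<^sup>\<beta>\<^sup>j\<^sup>/\<^sup>c F(0))\<close>, whose norm tends to \<open>0\<close> with \<open>p\<close>.\<close>
theorem exp_sum_plus_of_nat_neq_0:
  fixes \<beta> :: "'a \<Rightarrow> complex" and c q :: nat
  assumes J: "finite J" and nz: "\<And>j. j \<in> J \<Longrightarrow> \<beta> j \<noteq> 0" and c: "c > 0" and q: "q > 0"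
    and Rint: "int_coeffs (\<Prod>j\<in>J. [:-\<beta> j, 1:])"
  shows "(\<Sum>j\<in>J. exp (\<beta> j / of_nat c)) + of_nat q \<noteq> 0"
proof
  assume eq: "(\<Sum>j\<in>J. exp (\<beta> j / of_nat c)) + of_nat q = 0"
  define R where "R = (\<Prod>j\<in>J. [:-\<beta> j, 1:])"
  obtain r where r: "coeff R 0 = of_int r"
    using Rint unfolding R_def int_coeffs_def by (metis Ints_cases)
  have "coeff R 0 = (\<Prod>j\<in>J. - \<beta> j)"
    unfolding R_def poly_0_coeff_0[symmetric] by (simp add: poly_prod)
  then have "r \<noteq> 0" using r nz J by auto
  define \<theta> where "\<theta> j = \<beta> j / of_nat c" for j
  define K where "K = (\<Sum>j\<in>J. exp (norm (\<theta> j)) * exp (norm (\<theta> j)) * norm (\<theta> j))"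
  obtain M where M1: "M \<ge> 1" and M: "\<forall>j\<in>J. norm (\<beta> j) + (\<Prod>l\<in>J. norm (\<beta> j) + norm (\<beta> l)) \<le> M"
    by (rule finite_obtain_bound_ge_1[OF J, where g = "\<lambda>j. norm (\<beta> j) + (\<Prod>l\<in>J. norm (\<beta> j) + norm (\<beta> l))"])
  have Mj: "norm (\<beta> j) \<le> M \<and> (\<Prod>l\<in>J. norm (\<beta> j) + norm (\<beta> l)) \<le> M" if "j \<in> J" for j
  proof -
    have "0 \<le> (\<Prod>l\<in>J. norm (\<beta> j) + norm (\<beta> l))" by (intro prod_nonneg) simp
    then show ?thesis using bspec[OF M that] norm_ge_zero[of "\<beta> j"] by linarith
  qed
  obtain P0 where P0: "\<And>n. n \<ge> P0 \<Longrightarrow> K * M\<^sup>2 * ((M ^ 2) ^ n / fact n) < 1"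
    using eventually_mult_power_div_fact_less[of "K * M\<^sup>2" "M ^ 2"] unfolding eventually_sequentially by blast
  obtain p where p: "prime p" "P0 + q + nat \<bar>r\<bar> + 1 < p" using bigger_prime by blast
  then have p0: "p > 0" and "q < p" "\<bar>r\<bar> < int p" by linarith+
  define F where "F = pderiv_sum (niven_poly R c p)"
  obtain k where k: "k \<noteq> 0" "of_nat q * poly F 0 + (\<Sum>j\<in>J. poly F (\<theta> j)) = of_int k"
    using niven_sum_eq_nonzero_int[OF J R_def Rint[folded R_def] r \<open>r \<noteq> 0\<close> c q p(1)
        \<open>q < p\<close> \<open>\<bar>r\<bar> < int p\<close>]
    unfolding F_def \<theta>_def by blast
  have "of_nat q = - (\<Sum>j\<in>J. exp (\<theta> j))"
    using eq unfolding \<theta>_def by (simp add: eq_neg_iff_add_eq_0 add.commute)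
  then have "of_int k = (\<Sum>j\<in>J. poly F (\<theta> j)) - (\<Sum>j\<in>J. exp (\<theta> j)) * poly F 0"
    unfolding k(2)[symmetric] by simp
  also have "\<dots> = (\<Sum>j\<in>J. poly F (\<theta> j) - exp (\<theta> j) * poly F 0)"
    by (simp add: sum_subtractf sum_distrib_right)
  finally have "norm (of_int k :: complex) \<le> K * ((M ^ 2) ^ p / fact (p - 1))"
    unfolding K_def F_def \<theta>_def using norm_sum_pderiv_sum_niven_poly_le[OF J R_def c p0 M1 Mj] by simp
  also have "\<dots> = K * M\<^sup>2 * ((M ^ 2) ^ (p - 1) / fact (p - 1))"
    using p0 by (simp add: power_eq_if[of _ p])
  also have "\<dots> < 1" using P0[of "p - 1"] p by simp
  finally show False using k(1) by (simp only: norm_of_int)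
qed

text \<open>Discarding the \<open>q \<ge> 1\<close> subsets with sum zero (\<open>{}\<close> among them) reduces this to the
  previous theorem, once the denominators of the remaining subset sums are cleared.\<close>
theorem sum_Pow_exp_neq_0:
  fixes \<alpha> :: "'a \<Rightarrow> complex"
  assumes I: "finite I" and PS: "\<And>n. power_sum I \<alpha> (Suc n) \<in> \<rat>"
  shows "(\<Sum>X\<in>Pow I. exp (sum \<alpha> X)) \<noteq> 0"
proof
  assume expsum: "(\<Sum>X\<in>Pow I. exp (sum \<alpha> X)) = 0"
  define J where "J = {X \<in> Pow I. sum \<alpha> X \<noteq> 0}"
  define q where "q = card (Pow I - J)"
  have J: "finite J" "J \<subseteq> Pow I" unfolding J_def using I by auto
  have "{} \<in> Pow I - J" unfolding J_def by simp
  then have "q > 0" unfolding q_def using I by (auto simp: card_gt_0_iff)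
  have "(\<Sum>X\<in>Pow I. exp (sum \<alpha> X)) = (\<Sum>X\<in>J. exp (sum \<alpha> X)) + (\<Sum>X\<in>Pow I - J. exp (sum \<alpha> X))"
    using I J by (metis add.commute finite_Pow_iff sum.subset_diff)
  also have "(\<Sum>X\<in>Pow I - J. exp (sum \<alpha> X)) = of_nat q"
    unfolding q_def by (simp add: J_def)
  finally have eqJ: "(\<Sum>X\<in>J. exp (sum \<alpha> X)) + of_nat q = 0" using expsum by simp
  have "power_sum J (sum \<alpha>) (Suc n) = power_sum (Pow I) (sum \<alpha>) (Suc n)" for n
    unfolding power_sum_def using I J by (intro sum.mono_neutral_left) (auto simp: J_def)
  then have "power_sum J (sum \<alpha>) (Suc n) \<in> \<rat>" for n
    using subset_sums_power_sum_Rats[OF I PS] by simp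
  then obtain c :: nat where c: "c > 0" "int_coeffs (\<Prod>X\<in>J. [:- (of_nat c * sum \<alpha> X), 1:])"
    using scaled_roots_int_coeffs[OF J(1)] unfolding J_def by blast
  have "(\<Sum>X\<in>J. exp (of_nat c * sum \<alpha> X / of_nat c)) + of_nat q \<noteq> 0"
    using c \<open>q > 0\<close> by (intro exp_sum_plus_of_nat_neq_0 J(1)) (auto simp: J_def)
  then show False using eqJ c(1) by simp
qed

lemma algebraic_obtain_conjugates:
  fixes z :: complex
  assumes "algebraic z"
  obtains root :: "nat \<Rightarrow> complex" and d
  where "z \<in> root ` {..<d}" "\<forall>n. power_sum {..<d} root (Suc n) \<in> \<rat>"
proof -
  obtain P where P: "\<And>k. coeff P k \<in> \<rat>" "P \<noteq> 0" "poly P z = 0"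
    using assms unfolding algebraic_altdef by blast
  obtain root where fac: "smult (lead_coeff P) (\<Prod>i<degree P. [:-root i, 1:]) = P"
    using complex_poly_decompose' by blast
  have lc: "lead_coeff P \<noteq> 0" "lead_coeff P \<in> \<rat>" using P by auto
  have "lead_coeff P * (\<Prod>i<degree P. z - root i) = 0"
    using P(3) arg_cong[OF fac, of "\<lambda>p. poly p z"] by (simp add: poly_prod)
  then have "z \<in> root ` {..<degree P}" using lc(1) by auto
  moreover have "power_sum {..<degree P} root (Suc n) \<in> \<rat>" for n
  proof (rule power_sum_in_subring_if_coeffs[OF _ is_subring_Rats])
    fix k
    have "coeff P k = lead_coeff P * coeff (\<Prod>i<degree P. [:-root i, 1:]) k"
      using fac by (metis coeff_smult)
    then show "coeff (\<Prod>i<degree P. [:-root i, 1:]) k \<in> \<rat>"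
      using P(1)[of k] lc by (metis Rats_divide nonzero_mult_div_cancel_left)
  qed simp
  ultimately show ?thesis using that by blast
qed

lemma ii_power_plus_minus_ii_power_Rats: "\<i> ^ k + (- \<i>) ^ k \<in> \<rat>"
proof (cases "even k")
  case True
  then obtain m where "k = 2 * m" by (elim evenE)
  then show ?thesis by (simp add: power_mult)
next
  case False
  then obtain m where "k = 2 * m + 1" by (elim oddE)
  then show ?thesis by (simp add: power_mult)
qed

text \<open>If \<open>\<pi>\<close> were algebraic, so would be the numbers \<open>\<plusminus>i\<rho>\<close> for the conjugates \<open>\<rho>\<close> of \<open>\<pi>\<close>;
  their power sums are rational, and the factor \<open>1 + e\<^sup>i\<^sup>\<pi> = 0\<close> makes \<open>\<Prod> (1 + e\<^sup>\<plusminus>\<^sup>i\<^sup>\<rho>)\<close>,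
  the sum of the exponentials of all subset sums, vanish.\<close>
theorem transcendental_pi: "\<not> algebraic pi"
proof
  assume "algebraic pi"
  then have "algebraic (complex_of_real pi)" by simp
  then obtain root :: "nat \<Rightarrow> complex" and d
    where root: "complex_of_real pi \<in> root ` {..<d}" "\<forall>n. power_sum {..<d} root (Suc n) \<in> \<rat>"
    by (rule algebraic_obtain_conjugates)
  define I where "I = {..<d} \<times> (UNIV :: bool set)"
  define \<alpha> where "\<alpha> = (\<lambda>(i, b). (if b then \<i> else - \<i>) * root i)"
  have I: "finite I" unfolding I_def by simp
  have "power_sum I \<alpha> (Suc n) = (\<Sum>i<d. \<Sum>b\<in>UNIV. \<alpha> (i, b) ^ Suc n)" for n
    unfolding power_sum_def I_def by (simp add: sum.cartesian_product)
  also have "\<dots> n = (\<i> ^ Suc n + (- \<i>) ^ Suc n) * power_sum {..<d} root (Suc n)" for n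
    unfolding power_sum_def sum_distrib_left
    by (intro sum.cong refl) (simp add: UNIV_bool \<alpha>_def power_mult_distrib algebra_simps)
  finally have "power_sum I \<alpha> (Suc n) = (\<i> ^ Suc n + (- \<i>) ^ Suc n) * power_sum {..<d} root (Suc n)" for n .
  then have "power_sum I \<alpha> (Suc n) \<in> \<rat>" for n
    using Rats_mult[OF ii_power_plus_minus_ii_power_Rats root(2)[rule_format]] by (simp only:)
  then have "(\<Sum>X\<in>Pow I. exp (sum \<alpha> X)) \<noteq> 0" by (rule sum_Pow_exp_neq_0[OF I])
  moreover have "(\<Prod>x\<in>I. exp (\<alpha> x) + 1) = (\<Sum>X\<in>Pow I. (\<Prod>x\<in>X. exp (\<alpha> x)) * (\<Prod>x\<in>I - X. 1))"
    by (rule prod_add[OF I])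
  moreover have "\<dots> = (\<Sum>X\<in>Pow I. exp (sum \<alpha> X))"
    using I by (intro sum.cong refl) (auto simp: exp_sum finite_subset)
  moreover obtain i0 where "i0 < d" "root i0 = complex_of_real pi" using root(1) by auto
  then have "(i0, True) \<in> I" "exp (\<alpha> (i0, True)) + 1 = 0"
    unfolding I_def \<alpha>_def by (simp_all add: mult.commute exp_pi_i)
  ultimately show False using I by (metis prod_zero_iff)
qed

section \<open>Density via Kronecker's theorem\<close>

lemma sum_smult_prod_linear_neq_0:
  fixes a u :: "nat \<Rightarrow> 'a :: idom"
  assumes a: "inj_on a {..<K}" and i0: "i0 < K" "u i0 \<noteq> 0"
  shows "(\<Sum>i<K. smult (u i) (\<Prod>j\<in>{..<K} - {i}. [:a j, 1:])) \<noteq> 0"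
proof
  assume "(\<Sum>i<K. smult (u i) (\<Prod>j\<in>{..<K} - {i}. [:a j, 1:])) = 0"
  then have "0 = poly (\<Sum>i<K. smult (u i) (\<Prod>j\<in>{..<K} - {i}. [:a j, 1:])) (- a i0)"
    by simp
  also have "\<dots> = (\<Sum>i<K. u i * (\<Prod>j\<in>{..<K} - {i}. a j - a i0))"
    by (simp add: poly_sum poly_prod)
  also have "\<dots> = (\<Sum>i\<in>{i0}. u i * (\<Prod>j\<in>{..<K} - {i}. a j - a i0))"
    using i0(1) by (intro sum.mono_neutral_right) (auto simp: prod_zero_iff intro!: bexI[of _ i0])
  finally show False using a i0 by (auto simp: prod_zero_iff inj_on_def)
qed

lemma transcendental_imp_inverse_shifts_independent:
  fixes t :: real and a u :: "nat \<Rightarrow> int"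
  assumes t: "\<not> algebraic t" and a: "inj_on a {..<K}"
    and eq: "(\<Sum>i<K. of_int (u i) / (t + of_int (a i))) = 0"
  shows "\<forall>i<K. u i = 0"
proof (rule ccontr)
  assume "\<not> (\<forall>i<K. u i = 0)"
  then obtain i0 where i0: "i0 < K" "u i0 \<noteq> 0" by auto
  define P :: "real poly" where
    "P = (\<Sum>i<K. smult (of_int (u i)) (\<Prod>j\<in>{..<K} - {i}. [:of_int (a j), 1:]))"
  have shift_nz: "t + of_int (a j) \<noteq> 0" for j
    using t by (metis add_eq_0_iff algebraic_minus_iff algebraic_of_int)
  have "poly P t = (\<Sum>i<K. of_int (u i) * ((\<Prod>j<K. t + of_int (a j)) / (t + of_int (a i))))"
    unfolding P_def poly_sum poly_prod
  proof (intro sum.cong refl)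
    fix i assume "i \<in> {..<K}"
    then have "(\<Prod>j<K. t + of_int (a j)) = (t + of_int (a i)) * (\<Prod>j\<in>{..<K} - {i}. t + of_int (a j))"
      by (subst prod.remove[of _ i]) auto
    then show "poly (smult (of_int (u i)) (\<Prod>j\<in>{..<K} - {i}. [:of_int (a j), 1:])) t =
        of_int (u i) * ((\<Prod>j<K. t + of_int (a j)) / (t + of_int (a i)))"
      using shift_nz[of i] by (simp add: poly_prod add.commute)
  qed
  also have "\<dots> = (\<Prod>j<K. t + of_int (a j)) * (\<Sum>i<K. of_int (u i) / (t + of_int (a i)))"
    unfolding sum_distrib_left by (intro sum.cong refl) simp
  finally have "poly P t = 0" using eq by simp
  moreover have "P \<noteq> 0"
    unfolding P_def using a i0 by (intro sum_smult_prod_linear_neq_0) (auto simp: inj_on_def)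
  moreover have "int_coeffs P"
    unfolding P_def by (intro int_coeffs_sum int_coeffs_smult int_coeffs_prod int_coeffs_linear) auto
  ultimately have "algebraic t" unfolding int_coeffs_def by (intro algebraicI) auto
  then show False using t by contradiction
qed

lemma independent_inverse_pi_shifts:
  defines "\<theta> \<equiv> \<lambda>i::nat. 1 / (pi + real (Suc i))"
  shows "module.independent (\<lambda>r. (*) (real_of_int r)) (\<theta> ` {..<K})" and "inj_on \<theta> {..<K}"
proof -
  have pos: "pi + real (Suc i) > 0" for i using pi_gt_zero by linarith
  show inj: "inj_on \<theta> {..<K}"
    by (rule inj_onI) (use pos in \<open>simp add: \<theta>_def field_simps\<close>)
  interpret M: Modules.module "\<lambda>r. (*) (real_of_int r)"
    by (simp add: Modules.module.intro distrib_left mult.commute)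
  show "\<not> M.dependent (\<theta> ` {..<K})"
  proof
    assume "M.dependent (\<theta> ` {..<K})"
    then obtain u v where u: "v \<in> \<theta> ` {..<K}" "u v \<noteq> 0"
      "(\<Sum>w\<in>\<theta> ` {..<K}. real_of_int (u w) * w) = 0"
      using M.dependent_finite[of "\<theta> ` {..<K}"] by auto
    have "(\<Sum>i<K. real_of_int (u (\<theta> i)) / (pi + real_of_int (int (Suc i)))) =
        (\<Sum>i<K. real_of_int (u (\<theta> i)) * \<theta> i)"
      by (simp add: \<theta>_def)
    also have "\<dots> = 0" using u(3) by (simp add: sum.reindex[OF inj])
    finally have "\<forall>i<K. u (\<theta> i) = 0"
      by (intro transcendental_imp_inverse_shifts_independent[OF transcendental_pi, where a = "\<lambda>i. int (Suc i)"])
        (auto simp: inj_on_def)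
    with u(1,2) show False by auto
  qed
qed

lemma sigma1_range: "0 \<le> sigma1 x \<and> sigma1 x \<le> 1"
proof -
  have "of_int \<lfloor>(x + 1) / 2\<rfloor> \<le> (x + 1) / 2" "(x + 1) / 2 < of_int \<lfloor>(x + 1) / 2\<rfloor> + 1"
    by linarith+
  then show ?thesis unfolding sigma1_def by (simp add: abs_le_iff field_simps)
qed

lemma sigma1_add_even: "sigma1 (x + 2 * of_int h) = sigma1 x"
proof -
  have "(x + 2 * of_int h + 1) / 2 = (x + 1) / 2 + of_int h" by simp
  then have "\<lfloor>(x + 2 * of_int h + 1) / 2\<rfloor> = \<lfloor>(x + 1) / 2\<rfloor> + h" by (metis floor_add_int)
  then show ?thesis unfolding sigma1_def by (simp add: algebra_simps)
qed

text \<open>\<open>sigma1 x\<close> is the distance from \<open>x\<close> to \<open>2\<int>\<close>.\<close>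
lemma sigma1_le_abs_diff_even: "sigma1 x \<le> \<bar>x - 2 * of_int h\<bar>"
proof -
  define m where "m = \<lfloor>(x + 1) / 2\<rfloor>"
  have u: "\<bar>x - 2 * of_int m\<bar> \<le> 1" "sigma1 x = \<bar>x - 2 * of_int m\<bar>"
    using sigma1_range[of x] unfolding sigma1_def m_def by auto
  show ?thesis
  proof (cases "h = m")
    case False
    then have "1 \<le> \<bar>real_of_int (h - m)\<bar>" by linarith
    then show ?thesis using u by (simp add: abs_le_iff abs_if split: if_splits)
  qed (simp add: u)
qed

lemma sigma1_dist_le: "\<bar>sigma1 x - sigma1 z\<bar> \<le> \<bar>x - z\<bar>"
proof -
  have "sigma1 x \<le> \<bar>x - z\<bar> + sigma1 z" for x z
  proof -
    define m where "m = \<lfloor>(z + 1) / 2\<rfloor>"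
    have "sigma1 x \<le> \<bar>x - 2 * of_int m\<bar>" by (rule sigma1_le_abs_diff_even)
    also have "\<dots> \<le> \<bar>x - z\<bar> + \<bar>z - 2 * of_int m\<bar>" by linarith
    also have "\<bar>z - 2 * of_int m\<bar> = sigma1 z" unfolding sigma1_def m_def ..
    finally show ?thesis .
  qed
  from this[of x z] this[of z x] show ?thesis by linarith
qed

lemma sigma1_near_even_shift:
  assumes "0 \<le> y" "y \<le> 1" "\<bar>x - (y + 2 * of_int h)\<bar> < \<epsilon>"
  shows "\<bar>sigma1 x - y\<bar> < \<epsilon>"
proof -
  have "sigma1 (y + 2 * of_int h) = y" using assms by (simp add: sigma1_add_even sigma1_abs)
  then show ?thesis using sigma1_dist_le[of x "y + 2 * of_int h"] assms(3) by linarith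
qed

lemma sigma1_inverse_pi_shifts_approx:
  assumes y: "\<And>k. k \<in> {1..K} \<Longrightarrow> 0 \<le> y k \<and> y k \<le> 1" and "\<epsilon> > 0"
  shows "\<exists>w. \<forall>k\<in>{1..K}. \<bar>sigma1 (w / (pi + real k)) - y k\<bar> < \<epsilon>"
proof -
  define \<theta> where "\<theta> = (\<lambda>i::nat. 1 / (pi + real (Suc i)))"
  obtain t h where th: "\<And>i. i < K \<Longrightarrow> \<bar>t * \<theta> i - of_int (h i) - y (Suc i) / 2\<bar> < \<epsilon> / 2"
    using Kronecker_thm_1[where \<alpha> = "\<lambda>i. y (Suc i) / 2",
        OF independent_inverse_pi_shifts[of K, folded \<theta>_def] half_gt_zero[OF \<open>\<epsilon> > 0\<close>]]
    by blast
  have "\<bar>sigma1 (2 * t / (pi + real k)) - y k\<bar> < \<epsilon>" if k: "k \<in> {1..K}" for k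
  proof (rule sigma1_near_even_shift)
    show "0 \<le> y k" "y k \<le> 1" using y k by auto
    have eq: "2 * t / (pi + real k) - (y k + 2 * of_int (h (k - 1))) =
        2 * (t * \<theta> (k - 1) - of_int (h (k - 1)) - y (Suc (k - 1)) / 2)"
      using k by (simp add: \<theta>_def algebra_simps)
    have "\<bar>t * \<theta> (k - 1) - of_int (h (k - 1)) - y (Suc (k - 1)) / 2\<bar> < \<epsilon> / 2"
      using k by (intro th) auto
    then show "\<bar>2 * t / (pi + real k) - (y k + 2 * of_int (h (k - 1)))\<bar> < \<epsilon>"
      unfolding eq abs_mult by simp
  qed
  then show ?thesis by blast
qed

theorem proposition7:
  fixes K :: nat
  assumes "K \<ge> 1"
  shows "{(\<lambda>k\<in>{1..K}. sigma1 (w / (pi + real k))) | w::real. True}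
           \<subseteq> PiE {1..K} (\<lambda>_. {0..1::real})
       \<and> (\<forall>y \<in> PiE {1..K} (\<lambda>_. {0..1::real}). \<forall>\<epsilon>>0. \<exists>w::real.
            \<forall>k\<in>{1..K}. \<bar>sigma1 (w / (pi + real k)) - y k\<bar> < \<epsilon>)"
proof (intro conjI ballI allI impI)
  show "{(\<lambda>k\<in>{1..K}. sigma1 (w / (pi + real k))) | w::real. True} \<subseteq> PiE {1..K} (\<lambda>_. {0..1::real})"
    using sigma1_range by auto
next
  fix y :: "nat \<Rightarrow> real" and \<epsilon> :: real
  assume "y \<in> PiE {1..K} (\<lambda>_. {0..1::real})" and "\<epsilon> > 0"
  then show "\<exists>w. \<forall>k\<in>{1..K}. \<bar>sigma1 (w / (pi + real k)) - y k\<bar> < \<epsilon>"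
    by (intro sigma1_inverse_pi_shifts_approx) (auto simp: PiE_iff)
qed

end
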